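(* Let $A$ be a countable set. Then it is possible to assign to each $a\subseteq A$ sequences $y_a\in\ell^2$ and $w_a\in\{1,2\}^\omega$ such that (1) for all $a,b\subseteq A$, $y_a\in\mathsf{HC}(w_b)$ if and only if $b\not\subseteq a$; and (2) the maps $a\mapsto y_a$ and $a\mapsto w_a$ are homeomorphisms between $2^A$ and their ranges (with $\ell^2$ carrying its norm topology and $\{1,2\}^\omega$ the product topology).
   Context: $\omega=\{0,1,2,\dots\}$. Subsets of $A$ are identified with their characteristic functions in $2^A$, which carries the product of discrete topologies. $\ell^2$ is the Hilbert space of square-summable real sequences indexed by $\omega$. For $w\in\{1,2\}^\omega$, $B_w:\ell^2\to\ell^2$ is $B_w(x)(i)=w(i)\,x(i+1)$, and $\mathsf{HC}(w)$ is the set of $x\in\ell^2$ such that $\{B_w^k(x):k\in\omega\}$ is dense in $\ell^2$. *)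

theory Defs
  imports "HOL-Analysis.Analysis"
begin

definition l2 :: "(nat \<Rightarrow> real) set" where
  "l2 = {x. summable (\<lambda>i. (x i)\<^sup>2)}"

definition l2_norm :: "(nat \<Rightarrow> real) \<Rightarrow> real" where
  "l2_norm x = sqrt (\<Sum>i. (x i)\<^sup>2)"

definition l2_open :: "(nat \<Rightarrow> real) set \<Rightarrow> bool" where
  "l2_open U \<longleftrightarrow> U \<subseteq> l2 \<and>
     (\<forall>x\<in>U. \<exists>e>0. \<forall>z\<in>l2. l2_norm (\<lambda>i. z i - x i) < e \<longrightarrow> z \<in> U)"

lemma istopology_l2_open: "istopology l2_open"
  unfolding istopology_def
proof (intro conjI allI impI)
  fix S T assume S: "l2_open S" and T: "l2_open T"
  show "l2_open (S \<inter> T)"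
    unfolding l2_open_def
  proof (intro conjI ballI)
    show "S \<inter> T \<subseteq> l2" using S unfolding l2_open_def by blast
  next
    fix x assume x: "x \<in> S \<inter> T"
    obtain e1 where e1: "e1 > 0" "\<forall>z\<in>l2. l2_norm (\<lambda>i. z i - x i) < e1 \<longrightarrow> z \<in> S"
      using S x unfolding l2_open_def by blast
    obtain e2 where e2: "e2 > 0" "\<forall>z\<in>l2. l2_norm (\<lambda>i. z i - x i) < e2 \<longrightarrow> z \<in> T"
      using T x unfolding l2_open_def by blast
    show "\<exists>e>0. \<forall>z\<in>l2. l2_norm (\<lambda>i. z i - x i) < e \<longrightarrow> z \<in> S \<inter> T"
      using e1 e2 by (intro exI[of _ "min e1 e2"]) auto
  qed
next
  fix K assume K: "\<forall>S\<in>K. l2_open S"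
  show "l2_open (\<Union>K)"
    unfolding l2_open_def
  proof (intro conjI ballI)
    show "\<Union>K \<subseteq> l2" using K unfolding l2_open_def by blast
  next
    fix x assume "x \<in> \<Union>K"
    then obtain S where S: "S \<in> K" "x \<in> S" by blast
    then obtain e where "e > 0" "\<forall>z\<in>l2. l2_norm (\<lambda>i. z i - x i) < e \<longrightarrow> z \<in> S"
      using K unfolding l2_open_def by blast
    then show "\<exists>e>0. \<forall>z\<in>l2. l2_norm (\<lambda>i. z i - x i) < e \<longrightarrow> z \<in> \<Union>K"
      using S by blast
  qed
qed

definition l2_top :: "(nat \<Rightarrow> real) topology" where
  "l2_top = topology l2_open"

definition bshift :: "(nat \<Rightarrow> nat) \<Rightarrow> (nat \<Rightarrow> real) \<Rightarrow> (nat \<Rightarrow> real)" where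
  "bshift w x = (\<lambda>i. real (w i) * x (Suc i))"

definition HC :: "(nat \<Rightarrow> nat) \<Rightarrow> (nat \<Rightarrow> real) set" where
  "HC w = {x \<in> l2. l2_top closure_of {(bshift w ^^ k) x | k. True} = l2}"

definition weight_top :: "(nat \<Rightarrow> nat) topology" where
  "weight_top = product_topology (\<lambda>_. discrete_topology {1,2}) UNIV"

text \<open>The Cantor space 2^A: characteristic functions A -> bool (extensional,
  i.e. undefined outside A) with the product of discrete topologies.\<close>

definition cantor_top :: "'a set \<Rightarrow> ('a \<Rightarrow> bool) topology" where
  "cantor_top A = product_topology (\<lambda>_. discrete_topology UNIV) A"

definition set_of_char :: "'a set \<Rightarrow> ('a \<Rightarrow> bool) \<Rightarrow> 'a set" where
  "set_of_char A c = {x \<in> A. c x}"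

end

theory Submission
  imports Defs
begin

(* A subset of A is replaced by its image S under an injection of A into the natural numbers.
   The coordinates are cut into consecutive blocks; block t codes a number n and a finite list q
   of rationals and consists of an up-ramp, a window of length |q| and a down-ramp, both ramps of
   length R_t. The weight w_S is 2 on the up-ramp if n is in S and 1 otherwise, 1 on the window,
   and 1 on the down-ramp if n is in S and 2 otherwise, so every complete block multiplies the
   partial products of w_S by 2^R_t, whatever S is. The vector y_S vanishes outside the windows
   and on the windows of blocks with n in S; on any other window it carries q, divided by the
   partial product of the weights in front of the window for an up-ramp of weight 2.

   If n lies in S_b but not in S_a, shifting y_a to the window of a block coding (n, q) cancels
   this factor: the result starts with q divided by the partial products of w_b, and its tail is
   small because R_t dominates everything before block t. As every (n, q) is coded by
   arbitrarily late blocks, the orbit is dense. If S_b is contained in S_a, each window on which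
   y_a is nonzero follows an up-ramp of weight 1 for w_b, so the 0-th coordinates of all shifts
   of y_a are bounded by 1. This characterization makes both maps injective; they are
   continuous because each coordinate of w and each approximation of y depends on finitely many
   memberships, and compactness of 2^A makes them homeomorphisms onto their images. *)

lemma summable_comparison_nonneg:
  fixes f g :: "nat \<Rightarrow> real"
  assumes "summable g" "\<And>i. 0 \<le> f i" "\<And>i. f i \<le> g i"
  shows "summable f"
  using assms(1) by (rule summable_comparison_test') (use assms(2,3) in \<open>simp add: abs_of_nonneg\<close>)

lemma power2_le_abs:
  fixes x :: real
  assumes "\<bar>x\<bar> \<le> 1"
  shows "x\<^sup>2 \<le> \<bar>x\<bar>"
proof -
  have "\<bar>x\<bar> * \<bar>x\<bar> \<le> 1 * \<bar>x\<bar>"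
    using assms by (rule mult_right_mono) simp
  then show ?thesis
    by (simp add: power2_eq_square)
qed

lemma power2_diff_le:
  fixes a b :: real
  shows "(a - b)\<^sup>2 \<le> 2 * a\<^sup>2 + 2 * b\<^sup>2"
  using sum_squares_ge_zero[of "a + b" 0] by (simp add: power2_eq_square algebra_simps)

lemma prod_atLeastLessThan_const:
  assumes "\<And>j. a \<le> j \<Longrightarrow> j < b \<Longrightarrow> f j = c"
  shows "(\<Prod>j\<in>{a..<b}. f j) = c ^ (b - a)"
  using prod.cong[of "{a..<b}" "{a..<b}" f "\<lambda>_. c"] assms by simp

lemma sum_atLeastLessThan_blocks:
  fixes f :: "nat \<Rightarrow> 'a::comm_monoid_add"
  assumes "mono Q"
  shows "(\<Sum>p\<in>{Q K..<Q (K + n)}. f p) = (\<Sum>t<n. \<Sum>p\<in>{Q (K + t)..<Q (K + Suc t)}. f p)"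
proof (induction n)
  case (Suc n)
  have "Q K \<le> Q (K + n)" "Q (K + n) \<le> Q (K + Suc n)"
    using assms by (simp_all add: monoD)
  then have "(\<Sum>p\<in>{Q K..<Q (K + Suc n)}. f p) =
      (\<Sum>p\<in>{Q K..<Q (K + n)}. f p) + (\<Sum>p\<in>{Q (K + n)..<Q (K + Suc n)}. f p)"
    by (simp add: sum.atLeastLessThan_concat)
  then show ?case
    using Suc.IH by simp
qed simp

lemma suminf_shift_le_by_blocks:
  fixes f c :: "nat \<Rightarrow> real" and Q :: "nat \<Rightarrow> nat"
  assumes f0: "\<And>p. 0 \<le> f p" and Q: "strict_mono Q" and c: "summable c"
    and blocks: "\<And>t. K \<le> t \<Longrightarrow> (\<Sum>p\<in>{Q t..<Q (Suc t)}. f p) \<le> c t"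
  shows "summable (\<lambda>i. f (i + Q K))" and "(\<Sum>i. f (i + Q K)) \<le> (\<Sum>i. c (i + K))"
proof -
  have c0: "0 \<le> c t" if "K \<le> t" for t
    using blocks[OF that] sum_nonneg[of _ f] f0 by (meson order_trans)
  have Q_grows: "Q K + n \<le> Q (K + n)" for n
  proof (induction n)
    case (Suc n)
    have "Q (K + n) < Q (Suc (K + n))"
      using Q by (simp add: strict_mono_Suc_iff)
    then show ?case
      using Suc.IH by simp
  qed simp
  have partial: "(\<Sum>i<n. f (i + Q K)) \<le> (\<Sum>i. c (i + K))" for n
  proof -
    have "(\<Sum>i<n. f (i + Q K)) = (\<Sum>p\<in>{Q K..<Q K + n}. f p)"
      by (simp add: sum.atLeastLessThan_shift_0 atLeast0LessThan add.commute)
    also have "\<dots> \<le> (\<Sum>p\<in>{Q K..<Q (K + n)}. f p)"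
      using Q_grows[of n] f0 by (intro sum_mono2) auto
    also have "\<dots> \<le> (\<Sum>t<n. c (t + K))"
      unfolding sum_atLeastLessThan_blocks[OF strict_mono_mono[OF Q]]
      using blocks by (intro sum_mono) (simp add: add.commute)
    also have "\<dots> \<le> (\<Sum>i. c (i + K))"
      using c c0 by (intro sum_le_suminf) auto
    finally show ?thesis .
  qed
  show sf: "summable (\<lambda>i. f (i + Q K))"
    using f0 partial by (rule summableI_nonneg_bounded)
  show "(\<Sum>i. f (i + Q K)) \<le> (\<Sum>i. c (i + K))"
    using sf partial by (rule suminf_le_const)
qed

lemma sums_half_power_tail: "(\<lambda>i. (1/2::real) ^ Suc (i + K)) sums ((1/2) ^ K)"
proof -
  have "(\<lambda>i. (1/2::real) ^ Suc K * (1/2) ^ i) sums ((1/2) ^ Suc K * (1 / (1 - 1/2)))"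
    by (intro sums_mult geometric_sums) simp
  then show ?thesis
    by (simp add: power_add mult.commute)
qed

lemma exists_pos_mult_sq_le:
  fixes r :: real
  assumes "r > 0"
  shows "\<exists>\<delta>>0. real L * \<delta>\<^sup>2 \<le> r"
proof (intro exI conjI)
  show "sqrt (r / (real L + 1)) > 0"
    using assms by simp
  have "real L * (sqrt (r / (real L + 1)))\<^sup>2 = r * (real L / (real L + 1))"
    using assms by simp
  also have "\<dots> \<le> r"
    using assms by (intro mult_left_le) simp_all
  finally show "real L * (sqrt (r / (real L + 1)))\<^sup>2 \<le> r" .
qed

lemma exists_rat_list_approx:
  assumes "\<delta> > 0"
  shows "\<exists>qs::rat list. length qs = L \<and> (\<forall>i<L. \<bar>real_of_rat (qs ! i) - f i\<bar> < \<delta>)"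
proof -
  have "\<exists>r::rat. \<bar>real_of_rat r - f i\<bar> < \<delta>" for i
  proof -
    obtain q where "q \<in> \<rat>" "f i - \<delta> < q" "q < f i + \<delta>"
      using Rats_dense_in_real[of "f i - \<delta>" "f i + \<delta>"] assms by auto
    then show ?thesis
      by (metis Rats_cases abs_diff_less_iff)
  qed
  then obtain r :: "nat \<Rightarrow> rat" where "\<And>i. \<bar>real_of_rat (r i) - f i\<bar> < \<delta>"
    by metis
  then show ?thesis
    by (intro exI[of _ "map r [0..<L]"]) simp
qed

section \<open>Topology of the sequence space l2\<close>

lemma openin_l2_top: "openin l2_top U \<longleftrightarrow> l2_open U"
  by (simp add: l2_top_def istopology_l2_open)

lemma topspace_l2_top: "topspace l2_top = l2"
proof
  show "topspace l2_top \<subseteq> l2"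
    by (auto simp: topspace_def openin_l2_top l2_open_def)
  have "l2_open l2"
    unfolding l2_open_def by (auto intro: exI[of _ 1])
  then show "l2 \<subseteq> topspace l2_top"
    by (simp add: openin_l2_top openin_subset)
qed

lemma l2_diff:
  assumes "x \<in> l2" "z \<in> l2"
  shows "(\<lambda>i. z i - x i) \<in> l2"
proof -
  have sum: "summable (\<lambda>i. 2 * (z i)\<^sup>2 + 2 * (x i)\<^sup>2)"
    using assms unfolding l2_def by (intro summable_add summable_mult) auto
  show ?thesis
    unfolding l2_def mem_Collect_eq by (rule summable_comparison_nonneg[OF sum _ power2_diff_le]) simp
qed

lemma abs_le_l2_norm:
  assumes "x \<in> l2"
  shows "\<bar>x i\<bar> \<le> l2_norm x"
proof -
  have "(\<Sum>j\<in>{i}. (x j)\<^sup>2) \<le> (\<Sum>j. (x j)\<^sup>2)"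
    using assms unfolding l2_def by (intro sum_le_suminf) auto
  then have "sqrt ((x i)\<^sup>2) \<le> sqrt (\<Sum>j. (x j)\<^sup>2)"
    by (simp add: real_sqrt_le_mono del: real_sqrt_abs)
  then show ?thesis
    by (simp add: l2_norm_def)
qed

lemma l2_open_coordinate_slab: "l2_open {z \<in> l2. \<bar>z i - c\<bar> < r}"
  unfolding l2_open_def
proof (intro conjI ballI)
  fix x assume x: "x \<in> {z \<in> l2. \<bar>z i - c\<bar> < r}"
  show "\<exists>e>0. \<forall>z\<in>l2. l2_norm (\<lambda>i. z i - x i) < e \<longrightarrow> z \<in> {z \<in> l2. \<bar>z i - c\<bar> < r}"
  proof (intro exI[of _ "r - \<bar>x i - c\<bar>"] conjI ballI impI)
    fix z assume z: "z \<in> l2" "l2_norm (\<lambda>i. z i - x i) < r - \<bar>x i - c\<bar>"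
    have "\<bar>z i - x i\<bar> \<le> l2_norm (\<lambda>i. z i - x i)"
      using abs_le_l2_norm[OF l2_diff[of x z]] x z by auto
    then show "z \<in> {z \<in> l2. \<bar>z i - c\<bar> < r}"
      using z by auto
  qed (use x in auto)
qed auto

lemma Hausdorff_space_l2_top: "Hausdorff_space l2_top"
  unfolding Hausdorff_space_def topspace_l2_top
proof (intro allI impI)
  fix x y assume xy: "x \<in> l2 \<and> y \<in> l2 \<and> x \<noteq> y"
  then obtain i where "x i \<noteq> y i" by auto
  define r where "r = \<bar>x i - y i\<bar> / 2"
  have "r > 0" using \<open>x i \<noteq> y i\<close> by (simp add: r_def)
  have "\<not> (\<bar>a - x i\<bar> < r \<and> \<bar>a - y i\<bar> < r)" for a
    unfolding r_def using abs_triangle_ineq[of "x i - a" "a - y i"] by (simp add: abs_minus_commute)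
  then have "disjnt {z \<in> l2. \<bar>z i - x i\<bar> < r} {z \<in> l2. \<bar>z i - y i\<bar> < r}"
    unfolding disjnt_def by blast
  then show "\<exists>U V. openin l2_top U \<and> openin l2_top V \<and> x \<in> U \<and> y \<in> V \<and> disjnt U V"
    using xy \<open>r > 0\<close> by (intro exI conjI) (auto simp: openin_l2_top l2_open_coordinate_slab)
qed

lemma closure_of_l2_top_eq_l2I:
  assumes "\<And>x e. x \<in> l2 \<Longrightarrow> e > 0 \<Longrightarrow> \<exists>z\<in>S. z \<in> l2 \<and> l2_norm (\<lambda>i. z i - x i) < e"
  shows "l2_top closure_of S = l2"
proof
  show "l2_top closure_of S \<subseteq> l2"
    using closure_of_subset_topspace[of l2_top S] by (simp add: topspace_l2_top)
  show "l2 \<subseteq> l2_top closure_of S"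
  proof
    fix x assume x: "x \<in> l2"
    show "x \<in> l2_top closure_of S"
      unfolding in_closure_of topspace_l2_top openin_l2_top
    proof (intro conjI allI impI x)
      fix T assume "x \<in> T \<and> l2_open T"
      then obtain e where "e > 0" "\<forall>z\<in>l2. l2_norm (\<lambda>i. z i - x i) < e \<longrightarrow> z \<in> T"
        unfolding l2_open_def by blast
      then show "\<exists>z. z \<in> S \<and> z \<in> T"
        using assms[OF x] by blast
    qed
  qed
qed

lemma closure_of_l2_top_neq_l2_if_coordinate_bounded:
  assumes "\<And>z. z \<in> S \<Longrightarrow> \<bar>z i\<bar> \<le> r"
  shows "l2_top closure_of S \<noteq> l2"
proof
  assume dense: "l2_top closure_of S = l2"
  define x :: "nat \<Rightarrow> real" where "x = (\<lambda>j. if j = i then \<bar>r\<bar> + 2 else 0)"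
  have "summable (\<lambda>j. (x j)\<^sup>2)"
    by (rule summable_finite[of "{i}"]) (auto simp: x_def)
  then have x: "x \<in> l2"
    by (simp add: l2_def)
  then have "x \<in> l2_top closure_of S"
    using dense by simp
  then have near: "\<forall>T. x \<in> T \<and> openin l2_top T \<longrightarrow> (\<exists>z. z \<in> S \<and> z \<in> T)"
    unfolding in_closure_of by blast
  define U where "U = {z \<in> l2. \<bar>z i - x i\<bar> < 1}"
  have "x \<in> U" "openin l2_top U"
    using x by (simp_all add: U_def openin_l2_top l2_open_coordinate_slab)
  then obtain z where "z \<in> S" "z \<in> U"
    using near by blast
  then have "\<bar>z i - (\<bar>r\<bar> + 2)\<bar> < 1"
    by (simp add: U_def x_def)
  then show False
    using assms[OF \<open>z \<in> S\<close>] by linarith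
qed

lemma suminf_power2_diff_le:
  fixes z x :: "nat \<Rightarrow> real"
  assumes z: "summable (\<lambda>i. \<bar>z i\<bar>)" "(\<Sum>i. \<bar>z i\<bar>) \<le> 1" and x: "summable (\<lambda>i. (x i)\<^sup>2)"
  shows "(\<Sum>i. (z i - x i)\<^sup>2) \<le> 2 * (\<Sum>i. \<bar>z i\<bar>) + 2 * (\<Sum>i. (x i)\<^sup>2)"
proof -
  have bound: "(z i - x i)\<^sup>2 \<le> 2 * \<bar>z i\<bar> + 2 * (x i)\<^sup>2" for i
  proof -
    have "\<bar>z i\<bar> \<le> 1"
      using sum_le_suminf[OF z(1), of "{i}"] z(2) by simp
    then show ?thesis
      using power2_diff_le[of "z i" "x i"] power2_le_abs[OF \<open>\<bar>z i\<bar> \<le> 1\<close>] by linarith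
  qed
  have majorant: "(\<lambda>i. 2 * \<bar>z i\<bar> + 2 * (x i)\<^sup>2) sums (2 * (\<Sum>i. \<bar>z i\<bar>) + 2 * (\<Sum>i. (x i)\<^sup>2))"
    by (intro sums_add sums_mult summable_sums z(1) x)
  have sd: "summable (\<lambda>i. (z i - x i)\<^sup>2)"
    by (rule summable_comparison_nonneg[OF sums_summable[OF majorant] _ bound]) simp
  show ?thesis
    using suminf_le[OF bound sd sums_summable[OF majorant]] sums_unique[OF majorant] by simp
qed

lemma l2_norm_diff_sq_le:
  assumes x: "x \<in> l2" and z: "z \<in> l2"
    and head: "\<And>i. i < L \<Longrightarrow> \<bar>z i - x i\<bar> \<le> \<delta>"
    and tail: "summable (\<lambda>i. \<bar>z (i + L)\<bar>)" "(\<Sum>i. \<bar>z (i + L)\<bar>) \<le> \<eta>" "\<eta> \<le> 1"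
  shows "(l2_norm (\<lambda>i. z i - x i))\<^sup>2 \<le> L * \<delta>\<^sup>2 + 2 * \<eta> + 2 * (\<Sum>i. (x (i + L))\<^sup>2)"
proof -
  define d where "d = (\<lambda>i. z i - x i)"
  have sd: "summable (\<lambda>i. (d i)\<^sup>2)"
    using l2_diff[OF x z] by (simp add: l2_def d_def)
  have "(d i)\<^sup>2 \<le> \<delta>\<^sup>2" if "i < L" for i
    using power_mono[OF head[OF that] abs_ge_zero, of 2] by (simp add: d_def)
  then have "(\<Sum>i<L. (d i)\<^sup>2) \<le> (\<Sum>i<L. \<delta>\<^sup>2)"
    by (intro sum_mono) simp
  then have head_sum: "(\<Sum>i<L. (d i)\<^sup>2) \<le> L * \<delta>\<^sup>2"
    by simp
  have sx: "summable (\<lambda>i. (x (i + L))\<^sup>2)"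
    using x summable_iff_shift[where f = "\<lambda>i. (x i)\<^sup>2" and k = L] by (simp add: l2_def)
  have "(\<Sum>i. \<bar>z (i + L)\<bar>) \<le> 1"
    using tail(2,3) by linarith
  from suminf_power2_diff_le[OF tail(1) this sx]
  have "(\<Sum>i. (d (i + L))\<^sup>2) \<le> 2 * (\<Sum>i. \<bar>z (i + L)\<bar>) + 2 * (\<Sum>i. (x (i + L))\<^sup>2)"
    by (simp add: d_def)
  then have tail_sum: "(\<Sum>i. (d (i + L))\<^sup>2) \<le> 2 * \<eta> + 2 * (\<Sum>i. (x (i + L))\<^sup>2)"
    using tail(2) by linarith
  have "(l2_norm d)\<^sup>2 = (\<Sum>i. (d i)\<^sup>2)"
    unfolding l2_norm_def using sd by (simp add: suminf_nonneg)
  also have "\<dots> = (\<Sum>i. (d (i + L))\<^sup>2) + (\<Sum>i<L. (d i)\<^sup>2)"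
    by (rule suminf_split_initial_segment[OF sd])
  finally show ?thesis
    unfolding d_def[symmetric] using head_sum tail_sum by linarith
qed

section \<open>Powers of a weighted backward shift\<close>

lemma bshift_funpow_apply:
  "(bshift w ^^ k) x i = (\<Prod>j\<in>{i..<i+k}. real (w j)) * x (i + k)"
proof (induction k arbitrary: x)
  case (Suc k)
  have "(bshift w ^^ Suc k) x i = (bshift w ^^ k) (bshift w x) i"
    by (simp only: funpow_Suc_right comp_def)
  also have "\<dots> = (\<Prod>j\<in>{i..<i+Suc k}. real (w j)) * x (i + Suc k)"
    by (simp add: Suc.IH bshift_def prod.atLeastLessThan_Suc)
  finally show ?case .
qed simp

lemma abs_bshift_funpow_le:
  assumes "\<And>j. w j \<le> M"
  shows "\<bar>(bshift w ^^ k) x i\<bar> \<le> real M ^ k * \<bar>x (i + k)\<bar>"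
proof -
  have "(\<Prod>j\<in>{i..<i+k}. real (w j)) \<le> (\<Prod>j\<in>{i..<i+k}. real M)"
    using assms by (intro prod_mono) auto
  then have "(\<Prod>j\<in>{i..<i+k}. real (w j)) \<le> real M ^ k"
    by simp
  moreover have "0 \<le> (\<Prod>j\<in>{i..<i+k}. real (w j))"
    by (rule prod_nonneg) simp
  ultimately show ?thesis
    unfolding bshift_funpow_apply abs_mult by (simp add: mult_right_mono)
qed

lemma bshift_funpow_l2:
  assumes "\<And>j. w j \<le> M" "x \<in> l2"
  shows "(bshift w ^^ k) x \<in> l2"
proof -
  have sum: "summable (\<lambda>i. (real M ^ k)\<^sup>2 * (x (i + k))\<^sup>2)"
    using assms(2) summable_iff_shift[where f = "\<lambda>i. (x i)\<^sup>2" and k = k]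
    by (intro summable_mult) (simp add: l2_def)
  have le: "((bshift w ^^ k) x i)\<^sup>2 \<le> (real M ^ k)\<^sup>2 * (x (i + k))\<^sup>2" for i
  proof -
    have "\<bar>(bshift w ^^ k) x i\<bar> \<le> real M ^ k * \<bar>x (i + k)\<bar>"
      by (rule abs_bshift_funpow_le[OF assms(1)])
    from power_mono[OF this abs_ge_zero, of 2] show ?thesis
      by (simp add: power_mult_distrib)
  qed
  show ?thesis
    unfolding l2_def mem_Collect_eq by (rule summable_comparison_nonneg[OF sum _ le]) simp
qed

section \<open>The Cantor space\<close>

lemma topspace_cantor_top: "topspace (cantor_top A) = (\<Pi>\<^sub>E x\<in>A. UNIV)"
  by (simp add: cantor_top_def)

lemma compact_space_cantor_top: "compact_space (cantor_top A)"
  unfolding cantor_top_def compact_space_product_topology by (simp add: compact_space_discrete_topology)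

lemma set_of_char_subset: "set_of_char A c \<subseteq> A"
  by (auto simp: set_of_char_def)

lemma set_of_char_image: "set_of_char A ` topspace (cantor_top A) = {a. a \<subseteq> A}"
proof
  show "set_of_char A ` topspace (cantor_top A) \<subseteq> {a. a \<subseteq> A}"
    using set_of_char_subset[of A] by (simp add: image_subset_iff)
  show "{a. a \<subseteq> A} \<subseteq> set_of_char A ` topspace (cantor_top A)"
  proof
    fix a assume "a \<in> {a. a \<subseteq> A}"
    then have "a = set_of_char A (restrict (\<lambda>x. x \<in> a) A)"
      unfolding set_of_char_def by auto
    moreover have "restrict (\<lambda>x. x \<in> a) A \<in> topspace (cantor_top A)"
      by (simp add: topspace_cantor_top)
    ultimately show "a \<in> set_of_char A ` topspace (cantor_top A)"
      by (rule image_eqI)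
  qed
qed

lemma inj_on_set_of_char: "inj_on (set_of_char A) (topspace (cantor_top A))"
proof
  fix c c' assume c: "c \<in> topspace (cantor_top A)" "c' \<in> topspace (cantor_top A)"
    and eq: "set_of_char A c = set_of_char A c'"
  show "c = c'"
  proof
    fix x
    show "c x = c' x"
    proof (cases "x \<in> A")
      case True
      have "x \<in> set_of_char A c \<longleftrightarrow> x \<in> set_of_char A c'"
        using eq by simp
      then show ?thesis
        using True by (simp add: set_of_char_def)
    next
      case False
      then show ?thesis
        using c by (simp add: topspace_cantor_top PiE_def extensional_def)
    qed
  qed
qed

lemma continuous_map_cantor_topI:
  assumes into: "\<And>c. c \<in> topspace (cantor_top A) \<Longrightarrow> f c \<in> topspace Y"
    and local: "\<And>c V. c \<in> topspace (cantor_top A) \<Longrightarrow> openin Y V \<Longrightarrow> f c \<in> V \<Longrightarrow>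
       \<exists>F. finite F \<and> (\<forall>c'\<in>topspace (cantor_top A). (\<forall>x\<in>F. c' x = c x) \<longrightarrow> f c' \<in> V)"
  shows "continuous_map (cantor_top A) Y f"
  unfolding continuous_map_eq_topcontinuous_at topcontinuous_at_def
proof (intro ballI conjI allI impI)
  show "f \<in> topspace (cantor_top A) \<rightarrow> topspace Y"
    using into by blast
  fix c V assume c: "c \<in> topspace (cantor_top A)" and V: "openin Y V \<and> f c \<in> V"
  then obtain F where F: "finite F" "\<forall>c'\<in>topspace (cantor_top A). (\<forall>x\<in>F. c' x = c x) \<longrightarrow> f c' \<in> V"
    using local by blast
  define U where "U = (\<Pi>\<^sub>E x\<in>A. if x \<in> F then {c x} else UNIV)"
  have "finite {x \<in> A. (if x \<in> F then {c x} else UNIV) \<noteq> topspace (discrete_topology UNIV)}"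
    by (rule finite_subset[OF _ F(1)]) auto
  then have "openin (cantor_top A) U"
    unfolding cantor_top_def U_def openin_PiE_gen by simp
  moreover have "c \<in> U"
    using c by (auto simp: U_def topspace_cantor_top PiE_iff)
  moreover have "f c' \<in> V" if "c' \<in> U" for c'
  proof -
    have c': "c' \<in> topspace (cantor_top A)"
      using that by (auto simp: U_def topspace_cantor_top PiE_iff)
    have "c' x = c x" if "x \<in> F" for x
    proof (cases "x \<in> A")
      case True
      have "c' x \<in> (if x \<in> F then {c x} else UNIV)"
        using PiE_mem[OF \<open>c' \<in> U\<close>[unfolded U_def] True] .
      then show ?thesis
        using that by simp
    next
      case False
      then show ?thesis
        using c c' by (simp add: topspace_cantor_top PiE_iff extensional_def)
    qed
    then show ?thesis
      using F(2) c' by blast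
  qed
  ultimately show "\<exists>U. openin (cantor_top A) U \<and> c \<in> U \<and> (\<forall>c'\<in>U. f c' \<in> V)"
    by blast
qed

lemma continuous_map_cantor_top_finitely_determined:
  assumes e: "inj_on e A" and into: "\<And>S. f S \<in> topspace Y"
    and local: "\<And>S V. openin Y V \<Longrightarrow> f S \<in> V \<Longrightarrow> \<exists>F. finite F \<and> (\<forall>S'. S' \<inter> F = S \<inter> F \<longrightarrow> f S' \<in> V)"
  shows "continuous_map (cantor_top A) Y (\<lambda>c. f (e ` set_of_char A c))"
proof (rule continuous_map_cantor_topI)
  fix c V assume "openin Y V" "f (e ` set_of_char A c) \<in> V"
  from local[OF this] obtain F
    where F: "finite F" "\<forall>S'. S' \<inter> F = e ` set_of_char A c \<inter> F \<longrightarrow> f S' \<in> V"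
    by blast
  define G where "G = e -` F \<inter> A"
  have "finite G"
    unfolding G_def using F(1) e by (rule finite_vimage_IntI)
  moreover have "f (e ` set_of_char A c') \<in> V" if agree: "\<forall>x\<in>G. c' x = c x" for c'
  proof -
    have "n \<in> e ` set_of_char A c' \<longleftrightarrow> n \<in> e ` set_of_char A c" if "n \<in> F" for n
    proof -
      have "c' x = c x" if "x \<in> A" "e x = n" for x
        using agree that \<open>n \<in> F\<close> by (simp add: G_def)
      then show ?thesis
        unfolding set_of_char_def by blast
    qed
    then have "e ` set_of_char A c' \<inter> F = e ` set_of_char A c \<inter> F"
      by blast
    then show ?thesis
      using F(2) by blast
  qed
  ultimately show "\<exists>G. finite G \<and> (\<forall>c'\<in>topspace (cantor_top A). (\<forall>x\<in>G. c' x = c x) \<longrightarrow> f (e ` set_of_char A c') \<in> V)"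
    by blast
qed (rule into)

lemma homeomorphic_map_cantor_top_image:
  assumes cont: "continuous_map (cantor_top A) Y (\<lambda>c. f (set_of_char A c))" and "Hausdorff_space Y"
    and inj: "inj_on f {a. a \<subseteq> A}" and into: "f ` {a. a \<subseteq> A} \<subseteq> topspace Y"
  shows "homeomorphic_map (cantor_top A) (subtopology Y (f ` {a. a \<subseteq> A})) (\<lambda>c. f (set_of_char A c))"
proof (rule continuous_imp_homeomorphic_map)
  have img: "(\<lambda>c. f (set_of_char A c)) ` topspace (cantor_top A) = f ` {a. a \<subseteq> A}"
    by (simp only: image_image[of f "set_of_char A", symmetric] set_of_char_image)
  show "continuous_map (cantor_top A) (subtopology Y (f ` {a. a \<subseteq> A})) (\<lambda>c. f (set_of_char A c))"
    using cont img by (simp add: continuous_map_in_subtopology image_subset_iff_funcset[symmetric])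
  show "compact_space (cantor_top A)"
    by (rule compact_space_cantor_top)
  show "Hausdorff_space (subtopology Y (f ` {a. a \<subseteq> A}))"
    using assms(2) by (rule Hausdorff_space_subtopology)
  show "(\<lambda>c. f (set_of_char A c)) ` topspace (cantor_top A) = topspace (subtopology Y (f ` {a. a \<subseteq> A}))"
    using img into by (simp add: Int_absorb1)
  show "inj_on (\<lambda>c. f (set_of_char A c)) (topspace (cantor_top A))"
    using comp_inj_on[OF inj_on_set_of_char[of A], of f] inj by (simp add: set_of_char_image comp_def)
qed

lemma inj_on_if_detects_subset:
  assumes "\<And>a b. a \<in> U \<Longrightarrow> b \<in> U \<Longrightarrow> P (y a) (w b) \<longleftrightarrow> \<not> b \<subseteq> a"
  shows "inj_on y U" and "inj_on w U"
proof -
  show "inj_on y U"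
  proof (rule inj_onI)
    fix a a' assume a: "a \<in> U" "a' \<in> U" and "y a = y a'"
    then have "P (y a) (w a) \<longleftrightarrow> P (y a') (w a)" "P (y a') (w a') \<longleftrightarrow> P (y a) (w a')"
      by simp_all
    then show "a = a'"
      using assms[OF a(1) a(1)] assms[OF a(2) a(1)] assms[OF a(2) a(2)] assms[OF a(1) a(2)] by blast
  qed
  show "inj_on w U"
  proof (rule inj_onI)
    fix a a' assume a: "a \<in> U" "a' \<in> U" and "w a = w a'"
    then have "P (y a) (w a) \<longleftrightarrow> P (y a) (w a')" "P (y a') (w a') \<longleftrightarrow> P (y a') (w a)"
      by simp_all
    then show "a = a'"
      using assms[OF a(1) a(1)] assms[OF a(1) a(2)] assms[OF a(2) a(2)] assms[OF a(2) a(1)] by blast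
  qed
qed

section \<open>The block decomposition of the index set\<close>

(* Block t codes a triple (k, n, q) through prod_decode; k is ignored and only makes every
   pair (n, q) recur in arbitrarily late blocks. *)

definition block_elt :: "nat \<Rightarrow> nat" where
  "block_elt t = fst (prod_decode (snd (prod_decode t)))"

definition block_rats :: "nat \<Rightarrow> rat list" where
  "block_rats t = from_nat (snd (prod_decode (snd (prod_decode t))))"

definition block_len :: "nat \<Rightarrow> nat" where
  "block_len t = length (block_rats t)"

definition block_val :: "nat \<Rightarrow> nat \<Rightarrow> real" where
  "block_val t i = real_of_rat (block_rats t ! i)"

definition block_mass :: "nat \<Rightarrow> nat" where
  "block_mass t = nat \<lceil>\<Sum>i<block_len t. \<bar>block_val t i\<bar>\<rceil>"

(* Block t occupies [block_start t, block_start (Suc t)): an up-ramp of length block_ramp t,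
   the window [block_window t, block_down t) of length block_len t, and a down-ramp of length
   block_ramp t. The ramp length makes the window of block t contribute at most
   2^-(block_start t + t) to the l1 norm of the vectors, which absorbs the factor 2^N gained
   under a shift by N <= block_start t. *)

primrec block_start :: "nat \<Rightarrow> nat" where
  "block_start 0 = 0"
| "block_start (Suc t) = block_start t + 2 * (block_start t + t + block_mass t + 1) + block_len t"

definition block_ramp :: "nat \<Rightarrow> nat" where
  "block_ramp t = block_start t + t + block_mass t + 1"

definition block_window :: "nat \<Rightarrow> nat" where
  "block_window t = block_start t + block_ramp t"

definition block_down :: "nat \<Rightarrow> nat" where
  "block_down t = block_window t + block_len t"

definition block_exp :: "nat \<Rightarrow> nat" where
  "block_exp t = (\<Sum>u<t. block_ramp u)"

definition block_of :: "nat \<Rightarrow> nat" where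
  "block_of p = (LEAST t. p < block_start (Suc t))"

lemma block_code_exhaust: "\<exists>t\<ge>k. block_elt t = n \<and> block_rats t = qs"
  by (intro exI[of _ "prod_encode (k, prod_encode (n, to_nat qs))"])
     (simp add: block_elt_def block_rats_def le_prod_encode_1)

lemma block_start_Suc: "block_start (Suc t) = block_down t + block_ramp t"
  by (simp add: block_down_def block_window_def block_ramp_def)

declare block_start.simps(2) [simp del]

lemma block_window_le_down [simp]: "block_window t \<le> block_down t"
  by (simp add: block_down_def)

lemma block_start_less_window [simp]: "block_start t < block_window t"
  by (simp add: block_window_def block_ramp_def)

lemma block_down_less_start_Suc [simp]: "block_down t < block_start (Suc t)"
  by (simp add: block_start_Suc block_ramp_def)

lemma strict_mono_block_start: "strict_mono block_start"
  unfolding strict_mono_Suc_iff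
  by (simp add: block_start_Suc block_down_def block_window_def block_ramp_def)

lemma strict_mono_block_down: "strict_mono block_down"
  unfolding strict_mono_Suc_iff
proof
  fix t
  have "block_down t < block_start (Suc t)"
    by simp
  also have "\<dots> \<le> block_down (Suc t)"
    by (simp add: block_down_def block_window_def)
  finally show "block_down t < block_down (Suc t)" .
qed

lemma block_of_bounds: "block_start (block_of p) \<le> p \<and> p < block_start (Suc (block_of p))"
proof
  have "p \<le> block_start p"
    by (rule strict_mono_imp_increasing[OF strict_mono_block_start])
  moreover have "block_start p < block_start (Suc p)"
    using strict_mono_block_start by (simp add: strict_mono_Suc_iff)
  ultimately have "p < block_start (Suc p)"
    by linarith
  then show "p < block_start (Suc (block_of p))"
    unfolding block_of_def by (rule LeastI)
  show "block_start (block_of p) \<le> p"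
  proof (cases "block_of p")
    case (Suc u)
    then have "\<not> p < block_start (Suc u)"
      using not_less_Least[of u "\<lambda>t. p < block_start (Suc t)"] by (simp add: block_of_def)
    then show ?thesis using Suc by simp
  qed simp
qed

lemma block_of_le:
  assumes "p < block_start (Suc K)"
  shows "block_of p \<le> K"
proof (rule ccontr)
  assume "\<not> block_of p \<le> K"
  then have "block_start (Suc K) \<le> block_start (block_of p)"
    using strict_mono_less_eq[OF strict_mono_block_start] by simp
  then show False
    using assms block_of_bounds[of p] by linarith
qed

lemma block_of_eq:
  assumes "block_start t \<le> p" "p < block_start (Suc t)"
  shows "block_of p = t"
proof (rule antisym)
  show "block_of p \<le> t"
    using assms(2) by (rule block_of_le)
  show "t \<le> block_of p"
  proof (rule ccontr)
    assume "\<not> t \<le> block_of p"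
    then have "block_start (Suc (block_of p)) \<le> block_start t"
      using strict_mono_less_eq[OF strict_mono_block_start] by simp
    then show False
      using assms(1) block_of_bounds[of p] by linarith
  qed
qed

lemma block_of_window:
  assumes "i < block_len t"
  shows "block_of (block_window t + i) = t"
  using assms block_start_less_window[of t] block_down_less_start_Suc[of t]
  unfolding block_down_def by (intro block_of_eq) linarith+

section \<open>The weights\<close>

definition hc_weight :: "nat set \<Rightarrow> nat \<Rightarrow> nat" where
  "hc_weight S j = (let t = block_of j in
      if j < block_window t then (if block_elt t \<in> S then 2 else 1)
      else if j < block_down t then 1
      else (if block_elt t \<in> S then 1 else 2))"

lemma hc_weight_range: "hc_weight S j \<in> {1, 2}"
  by (simp add: hc_weight_def Let_def)

lemma hc_weight_le_2: "hc_weight S j \<le> 2"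
  using hc_weight_range[of S j] by auto

lemma hc_weight_topspace: "hc_weight S \<in> topspace weight_top"
  using hc_weight_range[of S] by (simp add: weight_top_def PiE_UNIV_domain Pi_iff)

lemma hc_weight_local:
  "(block_elt (block_of j) \<in> S \<longleftrightarrow> block_elt (block_of j) \<in> S') \<Longrightarrow> hc_weight S j = hc_weight S' j"
  by (simp add: hc_weight_def Let_def)

lemma hc_weight_in_block:
  assumes "block_start t \<le> j" "j < block_start (Suc t)"
  shows "hc_weight S j = (if j < block_window t then (if block_elt t \<in> S then 2 else 1)
      else if j < block_down t then 1 else (if block_elt t \<in> S then 1 else 2))"
  using block_of_eq[OF assms] by (simp add: hc_weight_def Let_def)

lemma prod_hc_weight_ramp_up:
  "(\<Prod>j\<in>{block_start t..<block_window t}. real (hc_weight S j)) = (if block_elt t \<in> S then 2 else 1) ^ block_ramp t"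
proof -
  have "real (hc_weight S j) = (if block_elt t \<in> S then 2 else 1)"
    if "block_start t \<le> j" "j < block_window t" for j
  proof -
    have "j < block_start (Suc t)"
      using that block_window_le_down[of t] block_down_less_start_Suc[of t] by linarith
    then show ?thesis
      using that hc_weight_in_block[of t j S] by simp
  qed
  then show ?thesis
    by (simp add: prod_atLeastLessThan_const block_window_def)
qed

lemma prod_hc_weight_window:
  assumes "k \<le> block_down t"
  shows "(\<Prod>j\<in>{block_window t..<k}. real (hc_weight S j)) = 1"
proof -
  have "real (hc_weight S j) = 1" if "block_window t \<le> j" "j < k" for j
  proof -
    have "block_start t \<le> j" "j < block_start (Suc t)"
      using that assms block_start_less_window[of t] block_down_less_start_Suc[of t] by linarith+
    then show ?thesis
      using that assms hc_weight_in_block[of t j S] by simp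
  qed
  then show ?thesis
    by (simp add: prod_atLeastLessThan_const)
qed

lemma prod_hc_weight_ramp_down:
  "(\<Prod>j\<in>{block_down t..<block_start (Suc t)}. real (hc_weight S j)) = (if block_elt t \<in> S then 1 else 2) ^ block_ramp t"
proof -
  have "real (hc_weight S j) = (if block_elt t \<in> S then 1 else 2)"
    if "block_down t \<le> j" "j < block_start (Suc t)" for j
  proof -
    have "block_start t \<le> j" "\<not> j < block_window t"
      using that block_start_less_window[of t] block_window_le_down[of t] by linarith+
    then show ?thesis
      using that hc_weight_in_block[of t j S] by simp
  qed
  then show ?thesis
    by (simp add: prod_atLeastLessThan_const block_start_Suc)
qed

lemma prod_hc_weight_from_start:
  assumes "block_window t \<le> k" "k \<le> block_down t"
  shows "(\<Prod>j\<in>{block_start t..<k}. real (hc_weight S j)) = (if block_elt t \<in> S then 2 else 1) ^ block_ramp t"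
proof -
  have "(\<Prod>j\<in>{block_start t..<k}. real (hc_weight S j)) =
      (\<Prod>j\<in>{block_start t..<block_window t}. real (hc_weight S j)) * (\<Prod>j\<in>{block_window t..<k}. real (hc_weight S j))"
    using assms(1) block_start_less_window[of t] by (intro prod.atLeastLessThan_concat[symmetric]) linarith+
  then show ?thesis
    by (simp only: prod_hc_weight_ramp_up prod_hc_weight_window[OF assms(2)] mult_1_right)
qed

lemma prod_hc_weight_block:
  "(\<Prod>j\<in>{block_start t..<block_start (Suc t)}. real (hc_weight S j)) = 2 ^ block_ramp t"
proof -
  have "(\<Prod>j\<in>{block_start t..<block_start (Suc t)}. real (hc_weight S j)) =
      (\<Prod>j\<in>{block_start t..<block_down t}. real (hc_weight S j)) *
      (\<Prod>j\<in>{block_down t..<block_start (Suc t)}. real (hc_weight S j))"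
    using block_start_less_window[of t] block_window_le_down[of t] block_down_less_start_Suc[of t]
    by (intro prod.atLeastLessThan_concat[symmetric]) linarith+
  also have "\<dots> = (if block_elt t \<in> S then 2 else 1) ^ block_ramp t * (if block_elt t \<in> S then 1 else 2) ^ block_ramp t"
    by (simp only: prod_hc_weight_from_start[OF block_window_le_down order_refl] prod_hc_weight_ramp_down)
  also have "\<dots> = 2 ^ block_ramp t"
    by (simp add: power_mult_distrib[symmetric])
  finally show ?thesis .
qed

lemma prod_hc_weight_lessThan_start: "(\<Prod>j<block_start t. real (hc_weight S j)) = 2 ^ block_exp t"
proof (induction t)
  case (Suc t)
  have "block_start t \<le> block_start (Suc t)"
    using strict_mono_block_start by (simp add: strict_mono_less_eq)
  then have "(\<Prod>j<block_start (Suc t). real (hc_weight S j)) =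
      (\<Prod>j<block_start t. real (hc_weight S j)) * (\<Prod>j\<in>{block_start t..<block_start (Suc t)}. real (hc_weight S j))"
    using prod.atLeastLessThan_concat[of 0 "block_start t" "block_start (Suc t)" "\<lambda>j. real (hc_weight S j)"]
    by (simp add: atLeast0LessThan)
  then show ?case
    by (simp add: Suc.IH prod_hc_weight_block block_exp_def power_add)
qed (simp add: block_exp_def)

lemma prod_hc_weight_lessThan_window:
  assumes "block_window t \<le> k" "k \<le> block_down t"
  shows "(\<Prod>j<k. real (hc_weight S j)) = 2 ^ block_exp t * (if block_elt t \<in> S then 2 ^ block_ramp t else 1)"
proof -
  have "block_start t \<le> k"
    using assms(1) block_start_less_window[of t] by linarith
  then have "(\<Prod>j<k. real (hc_weight S j)) =
      (\<Prod>j<block_start t. real (hc_weight S j)) * (\<Prod>j\<in>{block_start t..<k}. real (hc_weight S j))"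
    using prod.atLeastLessThan_concat[of 0 "block_start t" k "\<lambda>j. real (hc_weight S j)"]
    by (simp add: atLeast0LessThan)
  then show ?thesis
    by (simp add: prod_hc_weight_lessThan_start prod_hc_weight_from_start[OF assms])
qed

lemma one_le_prod_hc_weight: "1 \<le> (\<Prod>j<k. real (hc_weight S j))"
proof (rule prod_ge_1)
  show "1 \<le> real (hc_weight S j)" for j
    using hc_weight_range[of S j] by auto
qed

section \<open>The vectors\<close>

(* 2 ^ (block_exp t + block_ramp t) is the product of the weights in front of the window of
   block t when its up-ramp has weight 2. *)

definition hc_profile :: "nat \<Rightarrow> real" where
  "hc_profile p = (let t = block_of p in
     if block_window t \<le> p \<and> p < block_down t
     then block_val t (p - block_window t) / 2 ^ (block_exp t + block_ramp t) else 0)"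

definition hc_vector :: "nat set \<Rightarrow> nat \<Rightarrow> real" where
  "hc_vector S p = (if block_elt (block_of p) \<in> S then 0 else hc_profile p)"

lemma hc_profile_window:
  assumes "i < block_len t"
  shows "hc_profile (block_window t + i) = block_val t i / 2 ^ (block_exp t + block_ramp t)"
  using assms by (simp add: hc_profile_def block_of_window block_down_def)

lemma hc_profile_outside_window:
  assumes "block_start t \<le> p" "p < block_start (Suc t)" "\<not> (block_window t \<le> p \<and> p < block_down t)"
  shows "hc_profile p = 0"
  unfolding hc_profile_def Let_def block_of_eq[OF assms(1,2)] using assms(3) by auto

lemma sum_abs_block_val_le: "(\<Sum>i<block_len t. \<bar>block_val t i\<bar>) \<le> 2 ^ block_mass t"
proof -
  have "(\<Sum>i<block_len t. \<bar>block_val t i\<bar>) \<le> real (block_mass t)"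
    unfolding block_mass_def by (rule real_nat_ceiling_ge)
  also have "\<dots> \<le> 2 ^ block_mass t"
    using less_exp[of "block_mass t"] by (simp add: less_imp_le)
  finally show ?thesis .
qed

lemma abs_block_val_le:
  assumes "i < block_len t"
  shows "\<bar>block_val t i\<bar> \<le> 2 ^ block_ramp t"
proof -
  have "\<bar>block_val t i\<bar> \<le> (\<Sum>i<block_len t. \<bar>block_val t i\<bar>)"
    using assms by (intro member_le_sum) auto
  also have "\<dots> \<le> 2 ^ block_mass t"
    by (rule sum_abs_block_val_le)
  also have "\<dots> \<le> 2 ^ block_ramp t"
    by (intro power_increasing) (auto simp: block_ramp_def)
  finally show ?thesis .
qed

lemma abs_hc_profile_le_1: "\<bar>hc_profile p\<bar> \<le> 1"
proof (cases "block_window (block_of p) \<le> p \<and> p < block_down (block_of p)")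
  case True
  define t where "t = block_of p"
  have i: "p - block_window t < block_len t"
    using True by (auto simp: t_def block_down_def)
  have "\<bar>hc_profile p\<bar> = \<bar>block_val t (p - block_window t)\<bar> / 2 ^ (block_exp t + block_ramp t)"
    using True by (simp add: hc_profile_def Let_def t_def)
  also have "\<dots> \<le> 2 ^ block_ramp t / 2 ^ (block_exp t + block_ramp t)"
    by (intro divide_right_mono abs_block_val_le i) simp
  also have "\<dots> \<le> 1"
    by (simp add: power_add)
  finally show ?thesis .
qed (auto simp: hc_profile_def Let_def)

lemma abs_hc_vector_le: "\<bar>hc_vector S p\<bar> \<le> \<bar>hc_profile p\<bar>"
  by (simp add: hc_vector_def)

lemma sum_abs_hc_profile_block:
  "(\<Sum>p\<in>{block_down t..<block_down (Suc t)}. \<bar>hc_profile p\<bar>) \<le> (1/2) ^ (block_start (Suc t) + Suc t)"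
proof -
  define u where "u = Suc t"
  have zero: "hc_profile p = 0" if p: "block_down t \<le> p" "p < block_window u" for p
  proof (cases "p < block_start u")
    case True
    have "block_start t \<le> p"
      using p(1) block_start_less_window[of t] block_window_le_down[of t] by linarith
    then show ?thesis
      by (rule hc_profile_outside_window[of t]) (use True p in \<open>simp_all add: u_def\<close>)
  next
    case False
    have "p < block_start (Suc u)"
      using p(2) block_window_le_down[of u] block_down_less_start_Suc[of u] by linarith
    then show ?thesis
      by (intro hc_profile_outside_window[of u]) (use False p in simp_all)
  qed
  have "block_down t \<le> block_window u"
    using block_down_less_start_Suc[of t] block_start_less_window[of u] unfolding u_def by linarith
  then have "(\<Sum>p\<in>{block_down t..<block_down u}. \<bar>hc_profile p\<bar>) =
      (\<Sum>p\<in>{block_down t..<block_window u}. \<bar>hc_profile p\<bar>) + (\<Sum>p\<in>{block_window u..<block_down u}. \<bar>hc_profile p\<bar>)"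
    by (simp add: sum.atLeastLessThan_concat)
  also have "(\<Sum>p\<in>{block_down t..<block_window u}. \<bar>hc_profile p\<bar>) = 0"
    using zero by simp
  also have "(\<Sum>p\<in>{block_window u..<block_down u}. \<bar>hc_profile p\<bar>) = (\<Sum>i<block_len u. \<bar>hc_profile (block_window u + i)\<bar>)"
    by (simp add: block_down_def sum.atLeastLessThan_shift_0 atLeast0LessThan add.commute)
  also have "\<dots> = (\<Sum>i<block_len u. \<bar>block_val u i\<bar>) / 2 ^ (block_exp u + block_ramp u)"
    by (simp add: hc_profile_window sum_divide_distrib)
  also have "\<dots> \<le> 2 ^ block_mass u / 2 ^ block_ramp u"
    using sum_abs_block_val_le[of u]
    by (intro frac_le) (simp_all add: sum_nonneg power_increasing)
  also have "\<dots> \<le> (1/2) ^ (block_start u + u)"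
    by (simp add: block_ramp_def power_add power_divide field_simps)
  finally show ?thesis
    by (simp add: u_def)
qed

lemma hc_profile_tail:
  assumes "N \<le> block_start (Suc K)"
  shows "summable (\<lambda>i. \<bar>hc_profile (i + block_down K)\<bar>)"
    and "2 ^ N * (\<Sum>i. \<bar>hc_profile (i + block_down K)\<bar>) \<le> (1/2) ^ K"
proof -
  define f where "f p = 2 ^ N * \<bar>hc_profile p\<bar>" for p
  have blocks: "(\<Sum>p\<in>{block_down t..<block_down (Suc t)}. f p) \<le> (1/2) ^ Suc t" if "K \<le> t" for t
  proof -
    have "N \<le> block_start (Suc t)"
      using assms that strict_mono_less_eq[OF strict_mono_block_start, of "Suc K" "Suc t"] by simp
    then have pow: "(2::real) ^ N \<le> 2 ^ block_start (Suc t)"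
      by (rule power_increasing) simp
    have "(\<Sum>p\<in>{block_down t..<block_down (Suc t)}. f p) =
        2 ^ N * (\<Sum>p\<in>{block_down t..<block_down (Suc t)}. \<bar>hc_profile p\<bar>)"
      by (simp add: f_def sum_distrib_left)
    also have "\<dots> \<le> 2 ^ block_start (Suc t) * (1/2) ^ (block_start (Suc t) + Suc t)"
      by (rule mult_mono[OF pow sum_abs_hc_profile_block]) (simp_all add: sum_nonneg)
    also have "\<dots> = (1/2) ^ Suc t"
      by (simp add: power_add power_one_over)
    finally show ?thesis .
  qed
  have f0: "0 \<le> f p" for p
    by (simp add: f_def)
  have c: "summable (\<lambda>t. (1/2::real) ^ Suc t)"
    using summable_geometric[of "1/2::real"] by (simp add: summable_Suc_iff)
  note tail = suminf_shift_le_by_blocks[OF f0 strict_mono_block_down c blocks]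
  have "(\<Sum>i. f (i + block_down K)) \<le> (1/2) ^ K"
    using tail(2) sums_unique[OF sums_half_power_tail[of K]] by simp
  from tail(1)
  show sY: "summable (\<lambda>i. \<bar>hc_profile (i + block_down K)\<bar>)"
    by (simp add: f_def)
  show "2 ^ N * (\<Sum>i. \<bar>hc_profile (i + block_down K)\<bar>) \<le> (1/2) ^ K"
    using \<open>(\<Sum>i. f (i + block_down K)) \<le> (1/2) ^ K\<close> suminf_mult[OF sY, of "2 ^ N"] by (simp add: f_def)
qed

lemma summable_abs_hc_profile: "summable (\<lambda>p. \<bar>hc_profile p\<bar>)"
  using hc_profile_tail(1)[of 0 0] summable_iff_shift[where f = "\<lambda>p. \<bar>hc_profile p\<bar>"] by simp

lemma hc_vector_sq_le: "(hc_vector S p)\<^sup>2 \<le> \<bar>hc_profile p\<bar>"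
  using power2_le_abs[OF order_trans[OF abs_hc_vector_le[of S p] abs_hc_profile_le_1[of p]]]
    abs_hc_vector_le[of S p]
  by linarith

lemma hc_vector_l2: "hc_vector S \<in> l2"
  unfolding l2_def mem_Collect_eq
  by (rule summable_comparison_nonneg[OF summable_abs_hc_profile _ hc_vector_sq_le]) simp

lemma hc_vector_close:
  assumes agree: "\<And>t. t \<le> K \<Longrightarrow> block_elt t \<in> S \<longleftrightarrow> block_elt t \<in> S'"
  shows "l2_norm (\<lambda>i. hc_vector S' i - hc_vector S i) \<le> sqrt ((1/2) ^ K)"
proof -
  define d where "d i = hc_vector S' i - hc_vector S i" for i
  have sd: "summable (\<lambda>i. (d i)\<^sup>2)"
    using l2_diff[OF hc_vector_l2 hc_vector_l2] by (simp add: l2_def d_def)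
  have head: "d p = 0" if "p < block_down K" for p
  proof -
    have "block_of p \<le> K"
      using that block_down_less_start_Suc[of K] by (intro block_of_le) linarith
    then show ?thesis
      using agree by (simp add: d_def hc_vector_def)
  qed
  have "(d p)\<^sup>2 \<le> \<bar>hc_profile p\<bar>" for p
  proof -
    have d_le: "\<bar>d p\<bar> \<le> \<bar>hc_profile p\<bar>"
      by (simp add: d_def hc_vector_def)
    then show ?thesis
      using power2_le_abs[OF order_trans[OF d_le abs_hc_profile_le_1]] by linarith
  qed
  moreover have "summable (\<lambda>i. (d (i + block_down K))\<^sup>2)"
    using sd summable_iff_shift[where f = "\<lambda>i. (d i)\<^sup>2" and k = "block_down K"] by simp
  ultimately have "(\<Sum>i. (d (i + block_down K))\<^sup>2) \<le> (\<Sum>i. \<bar>hc_profile (i + block_down K)\<bar>)"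
    using hc_profile_tail(1)[of 0 K] by (intro suminf_le) simp_all
  also have "\<dots> \<le> (1/2) ^ K"
    using hc_profile_tail(2)[of 0 K] by simp
  finally have "(\<Sum>i. (d i)\<^sup>2) \<le> (1/2) ^ K"
    using suminf_split_initial_segment[OF sd, of "block_down K"] head by simp
  then show ?thesis
    unfolding l2_norm_def d_def[symmetric] by (rule real_sqrt_le_mono)
qed

section \<open>Hypercyclicity\<close>

(* If Sb is a subset of Sa, every window on which hc_vector Sa is nonzero follows an up-ramp
   of weight 1 for hc_weight Sb. *)

lemma abs_weighted_hc_vector_le_1:
  assumes "Sb \<subseteq> Sa"
  shows "\<bar>(\<Prod>j<k. real (hc_weight Sb j)) * hc_vector Sa k\<bar> \<le> 1"
proof (cases "hc_vector Sa k = 0")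
  case False
  define t where "t = block_of k"
  have "block_elt t \<notin> Sa" and window: "block_window t \<le> k \<and> k < block_down t"
    using False by (auto simp: hc_vector_def hc_profile_def Let_def t_def split: if_splits)
  then have "block_elt t \<notin> Sb"
    using assms by blast
  define i where "i = k - block_window t"
  have i: "i < block_len t" "k = block_window t + i"
    using window by (auto simp: i_def block_down_def)
  have "(\<Prod>j<k. real (hc_weight Sb j)) = 2 ^ block_exp t"
    using prod_hc_weight_lessThan_window[of t k Sb] window \<open>block_elt t \<notin> Sb\<close> by simp
  moreover have "hc_vector Sa k = block_val t i / 2 ^ (block_exp t + block_ramp t)"
    using \<open>block_elt t \<notin> Sa\<close> unfolding i(2) hc_vector_def block_of_window[OF i(1)]
    by (simp add: hc_profile_window[OF i(1)])
  ultimately have "\<bar>(\<Prod>j<k. real (hc_weight Sb j)) * hc_vector Sa k\<bar> =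
      2 ^ block_exp t * (\<bar>block_val t i\<bar> / 2 ^ (block_exp t + block_ramp t))"
    by (simp add: abs_mult)
  also have "\<dots> = \<bar>block_val t i\<bar> / 2 ^ block_ramp t"
    by (simp add: power_add)
  also have "\<dots> \<le> 1"
    using abs_block_val_le[OF i(1)] by simp
  finally show ?thesis .
qed simp

lemma hc_vector_not_HC:
  assumes "Sb \<subseteq> Sa"
  shows "hc_vector Sa \<notin> HC (hc_weight Sb)"
proof -
  have "\<bar>(bshift (hc_weight Sb) ^^ k) (hc_vector Sa) 0\<bar> \<le> 1" for k
    using abs_weighted_hc_vector_le_1[OF assms, of k] by (simp add: bshift_funpow_apply atLeast0LessThan)
  then have "l2_top closure_of {(bshift (hc_weight Sb) ^^ k) (hc_vector Sa) | k. True} \<noteq> l2"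
    by (intro closure_of_l2_top_neq_l2_if_coordinate_bounded[where i = 0 and r = 1]) auto
  then show ?thesis
    unfolding HC_def by blast
qed

lemma hc_orbit_window:
  assumes "block_elt s \<in> Sb" "block_elt s \<notin> Sa" "i < block_len s"
  shows "(bshift (hc_weight Sb) ^^ block_window s) (hc_vector Sa) i =
    block_val s i / (\<Prod>j<i. real (hc_weight Sb j))"
proof -
  define W where "W n = (\<Prod>j<n. real (hc_weight Sb j))" for n
  have W_pos: "W i > 0"
    using one_le_prod_hc_weight[where k = i and S = Sb] by (simp add: W_def)
  have "W (i + block_window s) = W i * (\<Prod>j\<in>{i..<i + block_window s}. real (hc_weight Sb j))"
    using prod.atLeastLessThan_concat[of 0 i "i + block_window s" "\<lambda>j. real (hc_weight Sb j)"]
    by (simp add: W_def atLeast0LessThan)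
  moreover have "W (i + block_window s) = 2 ^ (block_exp s + block_ramp s)"
    using prod_hc_weight_lessThan_window[of s "i + block_window s" Sb] assms(1,3)
    by (simp add: W_def block_down_def power_add)
  ultimately have "(\<Prod>j\<in>{i..<i + block_window s}. real (hc_weight Sb j)) = 2 ^ (block_exp s + block_ramp s) / W i"
    using W_pos by (simp add: field_simps)
  moreover have "hc_vector Sa (i + block_window s) = block_val s i / 2 ^ (block_exp s + block_ramp s)"
    using assms(2) unfolding hc_vector_def add.commute[of i] block_of_window[OF assms(3)]
    by (simp add: hc_profile_window[OF assms(3)])
  ultimately show ?thesis
    by (simp add: bshift_funpow_apply W_def)
qed

lemma hc_orbit_tail:
  fixes Sa Sb :: "nat set" and s :: nat
  defines "z \<equiv> (bshift (hc_weight Sb) ^^ block_window s) (hc_vector Sa)"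
  shows "summable (\<lambda>i. \<bar>z (i + block_len s)\<bar>)" and "(\<Sum>i. \<bar>z (i + block_len s)\<bar>) \<le> (1/2) ^ s"
proof -
  define N where "N = block_window s"
  have le: "\<bar>z (i + block_len s)\<bar> \<le> 2 ^ N * \<bar>hc_profile (i + block_down s)\<bar>" for i
  proof -
    have "\<bar>z (i + block_len s)\<bar> \<le> real 2 ^ N * \<bar>hc_vector Sa (i + block_len s + N)\<bar>"
      unfolding z_def N_def by (rule abs_bshift_funpow_le[OF hc_weight_le_2])
    also have "\<dots> \<le> 2 ^ N * \<bar>hc_profile (i + block_down s)\<bar>"
      using abs_hc_vector_le[of Sa "i + block_down s"] by (simp add: N_def block_down_def add.commute add.left_commute)
    finally show ?thesis .
  qed
  have "N \<le> block_start (Suc s)"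
    using block_window_le_down[of s] block_down_less_start_Suc[of s] unfolding N_def by linarith
  note profile_tail = hc_profile_tail[OF this]
  have sY: "summable (\<lambda>i. 2 ^ N * \<bar>hc_profile (i + block_down s)\<bar>)"
    using profile_tail(1) by simp
  show sz: "summable (\<lambda>i. \<bar>z (i + block_len s)\<bar>)"
    by (rule summable_comparison_nonneg[OF sY _ le]) simp
  have "(\<Sum>i. \<bar>z (i + block_len s)\<bar>) \<le> (\<Sum>i. 2 ^ N * \<bar>hc_profile (i + block_down s)\<bar>)"
    by (rule suminf_le[OF le sz sY])
  also have "\<dots> = 2 ^ N * (\<Sum>i. \<bar>hc_profile (i + block_down s)\<bar>)"
    by (rule suminf_mult[OF profile_tail(1)])
  also have "\<dots> \<le> (1/2) ^ s"
    by (rule profile_tail(2))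
  finally show "(\<Sum>i. \<bar>z (i + block_len s)\<bar>) \<le> (1/2) ^ s" .
qed

lemma hc_orbit_dist_sq_le:
  fixes Sa Sb :: "nat set" and s :: nat and \<delta> :: real
  assumes "block_elt s \<in> Sb" "block_elt s \<notin> Sa" "x \<in> l2"
    and approx: "\<And>i. i < block_len s \<Longrightarrow> \<bar>block_val s i - (\<Prod>j<i. real (hc_weight Sb j)) * x i\<bar> \<le> \<delta>"
  defines "z \<equiv> (bshift (hc_weight Sb) ^^ block_window s) (hc_vector Sa)"
  shows "(l2_norm (\<lambda>i. z i - x i))\<^sup>2 \<le> block_len s * \<delta>\<^sup>2 + 2 * (1/2) ^ s + 2 * (\<Sum>i. (x (i + block_len s))\<^sup>2)"
proof (rule l2_norm_diff_sq_le)
  show "z \<in> l2"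
    unfolding z_def by (rule bshift_funpow_l2[OF hc_weight_le_2 hc_vector_l2])
  show "\<bar>z i - x i\<bar> \<le> \<delta>" if "i < block_len s" for i
  proof -
    define W where "W = (\<Prod>j<i. real (hc_weight Sb j))"
    have "1 \<le> W"
      unfolding W_def by (rule one_le_prod_hc_weight)
    have "z i - x i = (block_val s i - W * x i) / W"
      using \<open>1 \<le> W\<close> unfolding z_def hc_orbit_window[OF assms(1,2) that] W_def[symmetric]
      by (simp add: field_simps)
    then have "\<bar>z i - x i\<bar> = \<bar>block_val s i - W * x i\<bar> / W"
      using \<open>1 \<le> W\<close> by simp
    also have "\<dots> \<le> \<bar>block_val s i - W * x i\<bar>"
      using \<open>1 \<le> W\<close> by (simp add: divide_le_eq mult_le_cancel_left1)
    finally show ?thesis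
      using approx[OF that] by (simp add: W_def)
  qed
qed (use assms(3) hc_orbit_tail[where Sa = Sa and Sb = Sb and s = s] in \<open>simp_all add: z_def power_le_one\<close>)

lemma hc_orbit_approx:
  assumes "n \<in> Sb" "n \<notin> Sa" "x \<in> l2" "e > 0"
  shows "\<exists>N. l2_norm (\<lambda>i. (bshift (hc_weight Sb) ^^ N) (hc_vector Sa) i - x i) < e"
proof -
  define W where "W i = (\<Prod>j<i. real (hc_weight Sb j))" for i
  have "\<exists>N. \<forall>n\<ge>N. norm (\<Sum>i. (x (i + n))\<^sup>2) < e\<^sup>2 / 4"
    using assms(3,4) by (intro suminf_exist_split) (simp_all add: l2_def)
  then obtain L where "norm (\<Sum>i. (x (i + L))\<^sup>2) < e\<^sup>2 / 4"
    by blast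
  then have L: "(\<Sum>i. (x (i + L))\<^sup>2) < e\<^sup>2 / 4"
    by simp
  obtain \<delta> where "\<delta> > 0" and \<delta>: "real L * \<delta>\<^sup>2 \<le> e\<^sup>2 / 4"
    using exists_pos_mult_sq_le[of "e\<^sup>2 / 4" L] assms(4) by auto
  then obtain qs where qs: "length qs = L" "\<forall>i<L. \<bar>real_of_rat (qs ! i) - W i * x i\<bar> < \<delta>"
    using exists_rat_list_approx[of \<delta> L "\<lambda>i. W i * x i"] by blast
  obtain k where k: "(1/2::real) ^ k < e\<^sup>2 / 8"
    using real_arch_pow_inv[of "e\<^sup>2 / 8" "1/2"] assms(4) by auto
  obtain s where s: "k \<le> s" "block_elt s = n" "block_rats s = qs"
    using block_code_exhaust[of k n qs] by blast
  define z where "z = (bshift (hc_weight Sb) ^^ block_window s) (hc_vector Sa)"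
  have "\<bar>block_val s i - W i * x i\<bar> \<le> \<delta>" if "i < block_len s" for i
    using qs that s(3) by (simp add: block_val_def block_len_def less_imp_le)
  then have "(l2_norm (\<lambda>i. z i - x i))\<^sup>2 \<le> L * \<delta>\<^sup>2 + 2 * (1/2) ^ s + 2 * (\<Sum>i. (x (i + L))\<^sup>2)"
    using hc_orbit_dist_sq_le[of s Sb Sa x \<delta>] assms s qs(1) by (simp add: z_def W_def block_len_def)
  also have "\<dots> < e\<^sup>2"
  proof -
    have "(1/2::real) ^ s \<le> (1/2) ^ k"
      using s(1) by (intro power_decreasing) auto
    then show ?thesis
      using \<delta> L k by linarith
  qed
  finally have "l2_norm (\<lambda>i. z i - x i) < e"
    by (rule power2_less_imp_less[OF _ less_imp_le[OF assms(4)]])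
  then show ?thesis
    unfolding z_def by blast
qed

lemma hc_vector_in_HC:
  assumes "n \<in> Sb" "n \<notin> Sa"
  shows "hc_vector Sa \<in> HC (hc_weight Sb)"
proof -
  have "l2_top closure_of {(bshift (hc_weight Sb) ^^ k) (hc_vector Sa) | k. True} = l2"
  proof (rule closure_of_l2_top_eq_l2I)
    fix x :: "nat \<Rightarrow> real" and e :: real
    assume "x \<in> l2" "e > 0"
    then obtain N where "l2_norm (\<lambda>i. (bshift (hc_weight Sb) ^^ N) (hc_vector Sa) i - x i) < e"
      using hc_orbit_approx[OF assms] by blast
    moreover have "(bshift (hc_weight Sb) ^^ N) (hc_vector Sa) \<in> l2"
      by (rule bshift_funpow_l2[OF hc_weight_le_2 hc_vector_l2])
    moreover have "(bshift (hc_weight Sb) ^^ N) (hc_vector Sa) \<in> {(bshift (hc_weight Sb) ^^ k) (hc_vector Sa) | k. True}"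
      by blast
    ultimately show "\<exists>z\<in>{(bshift (hc_weight Sb) ^^ k) (hc_vector Sa) | k. True}. z \<in> l2 \<and> l2_norm (\<lambda>i. z i - x i) < e"
      by blast
  qed
  then show ?thesis
    by (simp add: HC_def hc_vector_l2)
qed

lemma hc_vector_in_HC_iff: "hc_vector Sa \<in> HC (hc_weight Sb) \<longleftrightarrow> \<not> Sb \<subseteq> Sa"
proof
  show "\<not> Sb \<subseteq> Sa" if "hc_vector Sa \<in> HC (hc_weight Sb)"
    using that hc_vector_not_HC by blast
  show "hc_vector Sa \<in> HC (hc_weight Sb)" if "\<not> Sb \<subseteq> Sa"
    using that hc_vector_in_HC by (meson subsetI)
qed

section \<open>Continuity and the main theorem\<close>

lemma hc_vector_locally_determined:
  assumes "openin l2_top V" "hc_vector S \<in> V"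
  shows "\<exists>F. finite F \<and> (\<forall>S'. S' \<inter> F = S \<inter> F \<longrightarrow> hc_vector S' \<in> V)"
proof -
  obtain \<epsilon> where \<epsilon>: "\<epsilon> > 0" "\<And>z. z \<in> l2 \<Longrightarrow> l2_norm (\<lambda>i. z i - hc_vector S i) < \<epsilon> \<Longrightarrow> z \<in> V"
    using assms unfolding openin_l2_top l2_open_def by blast
  obtain K where K: "(1/2::real) ^ K < \<epsilon>\<^sup>2"
    using real_arch_pow_inv[of "\<epsilon>\<^sup>2" "1/2"] \<epsilon>(1) by auto
  have "hc_vector S' \<in> V" if eq: "S' \<inter> block_elt ` {..K} = S \<inter> block_elt ` {..K}" for S'
  proof (rule \<epsilon>(2)[OF hc_vector_l2])
    have "block_elt t \<in> S \<longleftrightarrow> block_elt t \<in> S'" if "t \<le> K" for t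
      using eq that by (metis Int_iff atMost_iff image_eqI)
    then have "l2_norm (\<lambda>i. hc_vector S' i - hc_vector S i) \<le> sqrt ((1/2) ^ K)"
      by (rule hc_vector_close)
    also have "\<dots> < sqrt (\<epsilon>\<^sup>2)"
      using K by (rule real_sqrt_less_mono)
    finally show "l2_norm (\<lambda>i. hc_vector S' i - hc_vector S i) < \<epsilon>"
      using \<epsilon>(1) by simp
  qed
  moreover have "finite (block_elt ` {..K})"
    by simp
  ultimately show ?thesis
    by blast
qed

lemma continuous_map_cantor_top_hc_vector:
  assumes "inj_on e A"
  shows "continuous_map (cantor_top A) l2_top (\<lambda>c. hc_vector (e ` set_of_char A c))"
  using hc_vector_l2 topspace_l2_top
  by (intro continuous_map_cantor_top_finitely_determined[OF assms _ hc_vector_locally_determined]) simp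

lemma Hausdorff_space_weight_top: "Hausdorff_space weight_top"
  unfolding weight_top_def by (simp add: Hausdorff_space_product_topology)

lemma continuous_map_cantor_top_hc_weight:
  assumes "inj_on e A"
  shows "continuous_map (cantor_top A) weight_top (\<lambda>c. hc_weight (e ` set_of_char A c))"
  unfolding weight_top_def continuous_map_componentwise_UNIV
proof
  fix j
  show "continuous_map (cantor_top A) (discrete_topology {1, 2}) (\<lambda>c. hc_weight (e ` set_of_char A c) j)"
  proof (rule continuous_map_cantor_top_finitely_determined[OF assms, where f = "\<lambda>S. hc_weight S j"])
    show "hc_weight S j \<in> topspace (discrete_topology {1, 2})" for S
      using hc_weight_range by simp
    show "\<exists>F. finite F \<and> (\<forall>S'. S' \<inter> F = S \<inter> F \<longrightarrow> hc_weight S' j \<in> V)"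
      if "hc_weight S j \<in> V" for S V
    proof (intro exI[of _ "{block_elt (block_of j)}"] conjI allI impI)
      fix S' assume "S' \<inter> {block_elt (block_of j)} = S \<inter> {block_elt (block_of j)}"
      then have "hc_weight S' j = hc_weight S j"
        by (intro hc_weight_local) blast
      then show "hc_weight S' j \<in> V"
        using that by simp
    qed simp
  qed
qed

theorem lemma7:
  fixes A :: "'a set"
  assumes "countable A"
  shows "\<exists>(y :: 'a set \<Rightarrow> (nat \<Rightarrow> real)) (w :: 'a set \<Rightarrow> (nat \<Rightarrow> nat)).
           (\<forall>a. a \<subseteq> A \<longrightarrow> y a \<in> l2 \<and> w a \<in> topspace weight_top) \<and>
           (\<forall>a b. a \<subseteq> A \<longrightarrow> b \<subseteq> A \<longrightarrow> (y a \<in> HC (w b) \<longleftrightarrow> \<not> b \<subseteq> a)) \<and>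
           homeomorphic_map (cantor_top A) (subtopology l2_top (y ` {a. a \<subseteq> A}))
             (\<lambda>c. y (set_of_char A c)) \<and>
           homeomorphic_map (cantor_top A) (subtopology weight_top (w ` {a. a \<subseteq> A}))
             (\<lambda>c. w (set_of_char A c))"
proof -
  define e where "e = to_nat_on A"
  have e: "inj_on e A"
    unfolding e_def using assms by (rule inj_on_to_nat_on)
  define y where "y a = hc_vector (e ` a)" for a
  define w where "w a = hc_weight (e ` a)" for a
  have HC: "y a \<in> HC (w b) \<longleftrightarrow> \<not> b \<subseteq> a" if "a \<subseteq> A" "b \<subseteq> A" for a b
    using inj_on_image_subset_iff[OF e that(2,1)] by (simp add: y_def w_def hc_vector_in_HC_iff)
  have inj: "inj_on y {a. a \<subseteq> A}" "inj_on w {a. a \<subseteq> A}"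
    using inj_on_if_detects_subset[of "{a. a \<subseteq> A}" "\<lambda>z v. z \<in> HC v" y w] HC by simp_all
  have "homeomorphic_map (cantor_top A) (subtopology l2_top (y ` {a. a \<subseteq> A})) (\<lambda>c. y (set_of_char A c))"
    using continuous_map_cantor_top_hc_vector[OF e] Hausdorff_space_l2_top inj(1)
    by (intro homeomorphic_map_cantor_top_image) (auto simp: y_def topspace_l2_top hc_vector_l2)
  moreover have "homeomorphic_map (cantor_top A) (subtopology weight_top (w ` {a. a \<subseteq> A})) (\<lambda>c. w (set_of_char A c))"
    using continuous_map_cantor_top_hc_weight[OF e] Hausdorff_space_weight_top inj(2)
    by (intro homeomorphic_map_cantor_top_image) (auto simp: w_def hc_weight_topspace)
  ultimately show ?thesis
    using HC by (intro exI[of _ y] exI[of _ w]) (simp add: y_def w_def hc_vector_l2 hc_weight_topspace)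
qed

end
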